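(* Let $\mathcal{D}$ be any distribution over $\mathbb{R}_{\geq 0}^k$ with $0<\mathrm{BRev}(\mathcal{D})<\infty$. Then there exists a sequence $X=(\vec{x}_i)_{i=1}^N$ ($N$ finite or $N=+\infty$) with every $\vec{x}_i\in\mathrm{supp}(\mathcal{D})$ and $\vec x_i\neq \vec 0$, such that \[\mathrm{MenuGap}(X)\geq \frac{\mathrm{Rev}(\mathcal{D})}{9\,\mathrm{BRev}(\mathcal{D})}.\] In particular, if $\mathrm{Rev}(\mathcal{D})/\mathrm{BRev}(\mathcal{D})=\infty$, then $\mathrm{MenuGap}(X)=\infty$.
   Context: Setting: one seller, one additive buyer, $k$ items; the buyer's value vector $\vec v\in\mathbb{R}^k_{\ge0}$ is drawn from a (possibly correlated) distribution $\mathcal{D}$. A mechanism $M$ is a set of options $(\vec q,p)$ with $\vec q\in[0,1]^k$, $p\in\mathbb{R}$, always containing the null option $(\vec 0,0)$; a buyer with values $\vec v$ selects an option maximizing $\vec v\cdot\vec q-p$ (ties broken arbitrarily; a maximizer is assumed to exist), and $\vec q^M(\vec v),p^M(\vec v)$ denote the allocation and price of the selected option. $\mathrm{Rev}(\mathcal{D},M)=\mathbb{E}_{\vec v\sim\mathcal{D}}[p^M(\vec v)]$, $\mathrm{Rev}(\mathcal{D})=\sup_M \mathrm{Rev}(\mathcal{D},M)$ (possibly $\infty$), and $\mathrm{BRev}(\mathcal{D})=\sup_{p\ge0} p\cdot\Pr_{\vec v\sim\mathcal{D}}[\sum_i v_i\ge p]$ (revenue of optimally pricing the grand bundle). MenuGap: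 Let $X=(\vec x_i)_{i=1}^N$ be an ordered sequence of nonzero points of $\mathbb{R}^k_{\ge0}$ ($N$ finite or $+\infty$), and $Q=(\vec q_i)_{i=0}^N$ an ordered sequence of points of $[0,1]^k$ with $\vec q_0=(0,\dots,0)$. Define $\mathrm{gap}_i^{X,Q}:=\min_{0\le j<i}(\vec q_i-\vec q_j)\cdot\vec x_i$ and $\mathrm{MenuGap}(X,Q):=\sum_{i=1}^N \mathrm{gap}_i^{X,Q}/\|\vec x_i\|_1$, and $\mathrm{MenuGap}(X):=\sup_Q \mathrm{MenuGap}(X,Q)$. *)

theory Defs
  imports "HOL-Probability.Probability"
begin

definition nonneg_orthant :: "(real^'k) set" where
  "nonneg_orthant = {v. \<forall>i. 0 \<le> v $ i}"

definition unit_cube :: "(real^'k) set" where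
  "unit_cube = {q. \<forall>i. 0 \<le> q $ i \<and> q $ i \<le> 1}"

definition l1norm :: "real^'k \<Rightarrow> real" where
  "l1norm x = (\<Sum>i\<in>UNIV. \<bar>x $ i\<bar>)"

definition supp :: "(real^'k) measure \<Rightarrow> (real^'k) set" where
  "supp D = {x. \<forall>e>0. emeasure D (ball x e) > 0}"

text \<open>A mechanism: a set of options (allocation, price), allocations in the unit cube,
  containing the null option.\<close>
definition is_mechanism :: "((real^'k) \<times> real) set \<Rightarrow> bool" where
  "is_mechanism M \<longleftrightarrow> M \<subseteq> unit_cube \<times> UNIV \<and> (0, 0) \<in> M"

text \<open>A buyer choice rule (arbitrary tie-breaking): for every value vector, an option of M
  maximising the buyer's utility.\<close>
definition buyer_choice :: "((real^'k) \<times> real) set \<Rightarrow> (real^'k \<Rightarrow> (real^'k) \<times> real) \<Rightarrow> bool" where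
  "buyer_choice M sel \<longleftrightarrow>
     (\<forall>v\<in>nonneg_orthant. sel v \<in> M \<and>
        (\<forall>opt\<in>M. v \<bullet> fst opt - snd opt \<le> v \<bullet> fst (sel v) - snd (sel v)))"

text \<open>Admissible (mechanism, choice rule): the price paid is a random variable whose
  expectation exists (negative part has finite expectation).\<close>
definition admissible :: "(real^'k) measure \<Rightarrow> ((real^'k) \<times> real) set
    \<Rightarrow> (real^'k \<Rightarrow> (real^'k) \<times> real) \<Rightarrow> bool" where
  "admissible D M sel \<longleftrightarrow> is_mechanism M \<and> buyer_choice M sel \<and>
     (\<lambda>v. snd (sel v)) \<in> borel_measurable D \<and>
     (\<integral>\<^sup>+ v. ennreal (- snd (sel v)) \<partial>D) < \<infinity>"

definition mech_rev :: "(real^'k) measure \<Rightarrow> (real^'k \<Rightarrow> (real^'k) \<times> real) \<Rightarrow> ereal" where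
  "mech_rev D sel =
     enn2ereal (\<integral>\<^sup>+ v. ennreal (snd (sel v)) \<partial>D) - enn2ereal (\<integral>\<^sup>+ v. ennreal (- snd (sel v)) \<partial>D)"

definition Rev :: "(real^'k) measure \<Rightarrow> ereal" where
  "Rev D = (SUP ms \<in> {(M, sel). admissible D M sel}. mech_rev D (snd ms))"

definition BRev :: "(real^'k) measure \<Rightarrow> ereal" where
  "BRev D = (SUP p \<in> {0..}. ereal (p * measure D {v \<in> space D. p \<le> (\<Sum>i\<in>UNIV. v $ i)}))"

text \<open>Sequences are indexed from 1 to N (N :: enat, possibly infinite); Q is indexed from 0.\<close>
definition gap :: "(nat \<Rightarrow> real^'k) \<Rightarrow> (nat \<Rightarrow> real^'k) \<Rightarrow> nat \<Rightarrow> real" where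
  "gap X Q i = Min ((\<lambda>j. (Q i - Q j) \<bullet> X i) ` {..<i})"

definition partial_menu_gap :: "(nat \<Rightarrow> real^'k) \<Rightarrow> (nat \<Rightarrow> real^'k) \<Rightarrow> nat \<Rightarrow> real" where
  "partial_menu_gap X Q n = (\<Sum>i=1..n. gap X Q i / l1norm (X i))"

text \<open>For N = \<infinity> the infinite sum is read as the liminf of the partial sums
  (equal to the sum whenever the series has a limit in the extended reals).\<close>
definition menu_gap_Q :: "enat \<Rightarrow> (nat \<Rightarrow> real^'k) \<Rightarrow> (nat \<Rightarrow> real^'k) \<Rightarrow> ereal" where
  "menu_gap_Q N X Q = (case N of
       enat n \<Rightarrow> ereal (partial_menu_gap X Q n)
     | \<infinity> \<Rightarrow> liminf (\<lambda>n. ereal (partial_menu_gap X Q n)))"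

definition valid_Q :: "(nat \<Rightarrow> real^'k) \<Rightarrow> bool" where
  "valid_Q Q \<longleftrightarrow> Q 0 = 0 \<and> (\<forall>i. Q i \<in> unit_cube)"

definition menu_gap :: "enat \<Rightarrow> (nat \<Rightarrow> real^'k) \<Rightarrow> ereal" where
  "menu_gap N X = (SUP Q \<in> {Q. valid_Q Q}. menu_gap_Q N X Q)"

end

theory Submission
  imports Defs
begin

text \<open>
  A mechanism whose revenue is far above BRev earns most of it from prices in a bounded range,
  which splits into dyadic bands; the bands of one parity carry at least half of it. In each such
  band of mass P there is a support point x with value l1norm x of order BRev / P, since otherwise
  pricing the grand bundle at that value would beat BRev. Listing these points by increasing band,
  incentive compatibility makes the gap of each point at least half its price, so its normalized
  gap is of order price * P / BRev, and summing over the bands gives a constant fraction of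
  Rev / BRev. If Rev is infinite, menus of gap at least 2^(k+1) are concatenated after squeezing the
  allocations of the k-th one into a layer just below 1 that lies above all earlier layers, which
  keeps 2^-(k+1) of its gap, so the total gap diverges.
\<close>

lemma closed_nonneg_orthant: "closed (nonneg_orthant :: (real^'k) set)"
proof -
  have "nonneg_orthant = (\<Inter>i. {v::real^'k. 0 \<le> v $ i})"
    unfolding nonneg_orthant_def by auto
  moreover have "closed {v::real^'k. 0 \<le> v $ i}" for i
    by (intro closed_Collect_le continuous_intros)
  ultimately show ?thesis
    using closed_INT[of UNIV "\<lambda>i. {v::real^'k. 0 \<le> v $ i}"] by simp
qed

lemma l1norm_eq_sum: "v \<in> nonneg_orthant \<Longrightarrow> l1norm v = (\<Sum>i\<in>UNIV. v $ i)"
  unfolding l1norm_def nonneg_orthant_def by simp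

lemma zero_in_unit_cube: "0 \<in> unit_cube"
  unfolding unit_cube_def by simp

lemma l1norm_pos:
  assumes "x \<noteq> 0"
  shows "0 < l1norm x"
proof -
  obtain t where "x $ t \<noteq> 0" using assms by (auto simp: vec_eq_iff)
  then have "0 < \<bar>x $ t\<bar>" by simp
  also have "\<dots> \<le> l1norm x" unfolding l1norm_def by (rule member_le_sum) auto
  finally show ?thesis .
qed

lemma inner_le_l1norm:
  fixes v q :: "real^'k"
  assumes "v \<in> nonneg_orthant" "q \<in> unit_cube"
  shows "v \<bullet> q \<le> l1norm v"
  unfolding inner_vec_def l1norm_eq_sum[OF assms(1)]
  using assms unfolding nonneg_orthant_def unit_cube_def
  by (intro sum_mono) (simp add: mult_left_le)

lemma inner_le_inner_nonneg_orthant: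
  fixes a b x :: "real^'k"
  assumes "\<And>t. a $ t \<le> b $ t" "x \<in> nonneg_orthant"
  shows "a \<bullet> x \<le> b \<bullet> x"
  unfolding inner_vec_def
  using assms unfolding nonneg_orthant_def by (intro sum_mono) (simp add: mult_right_mono)

section \<open>Menu gaps\<close>

lemma gap_le: "j < i \<Longrightarrow> gap X Q i \<le> (Q i - Q j) \<bullet> X i"
  unfolding gap_def by (rule Min_le) auto

lemma le_gap:
  assumes "0 < i" "\<And>j. j < i \<Longrightarrow> c \<le> (Q i - Q j) \<bullet> X i"
  shows "c \<le> gap X Q i"
  unfolding gap_def using assms by (subst Min_ge_iff) auto

lemma menu_gap_Q_le_menu_gap: "valid_Q Q \<Longrightarrow> menu_gap_Q N X Q \<le> menu_gap N X"
  unfolding menu_gap_def by (rule SUP_upper) simp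

lemma menu_gap_nonneg: "0 \<le> menu_gap N X"
proof -
  have "gap X (\<lambda>_. 0) i = 0" if "1 \<le> i" for i
  proof -
    have "(\<lambda>j. (0 - 0) \<bullet> X i) ` {..<i} = {0}"
      using that by (simp add: image_constant_conv lessThan_empty_iff)
    then show ?thesis by (simp add: gap_def)
  qed
  then have "partial_menu_gap X (\<lambda>_. 0) n = 0" for n by (simp add: partial_menu_gap_def)
  then have "menu_gap_Q N X (\<lambda>_. 0) = 0"
    by (cases N) (simp_all add: menu_gap_Q_def zero_ereal_def Liminf_const)
  then show ?thesis
    using menu_gap_Q_le_menu_gap[of "\<lambda>_. 0" N X] by (simp add: valid_Q_def zero_in_unit_cube)
qed

lemma partial_menu_gap_mono:
  assumes "\<And>i. 1 \<le> i \<Longrightarrow> 0 \<le> gap X Q i / l1norm (X i)" "m \<le> n"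
  shows "partial_menu_gap X Q m \<le> partial_menu_gap X Q n"
  unfolding partial_menu_gap_def using assms by (intro sum_mono2) auto

lemma menu_gap_Q_infinity_eq_infinity:
  assumes nonneg: "\<And>i. 1 \<le> i \<Longrightarrow> 0 \<le> gap X Q i / l1norm (X i)"
    and unbounded: "\<And>K::nat. \<exists>n. real K \<le> partial_menu_gap X Q n"
  shows "menu_gap_Q \<infinity> X Q = \<infinity>"
proof -
  have "((\<lambda>n. ereal (partial_menu_gap X Q n)) \<longlongrightarrow> \<infinity>) sequentially"
    unfolding tendsto_PInfty eventually_sequentially
  proof
    fix r :: real
    obtain K :: nat where K: "r < real K" using reals_Archimedean2 by blast
    obtain n where n: "real K \<le> partial_menu_gap X Q n" using unbounded by blast
    show "\<exists>n. \<forall>m\<ge>n. ereal r < ereal (partial_menu_gap X Q m)"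
    proof (intro exI allI impI)
      fix m assume "n \<le> m"
      then have "partial_menu_gap X Q n \<le> partial_menu_gap X Q m"
        using nonneg partial_menu_gap_mono by blast
      then show "ereal r < ereal (partial_menu_gap X Q m)" using K n by simp
    qed
  qed
  then show ?thesis unfolding menu_gap_Q_def by (simp add: lim_imp_Liminf)
qed

definition menu_block ::
    "(real^'k) set \<Rightarrow> nat \<Rightarrow> (nat \<Rightarrow> real^'k) \<Rightarrow> (nat \<Rightarrow> real^'k) \<Rightarrow> bool" where
  "menu_block S L X Q \<longleftrightarrow>
     valid_Q Q \<and> (\<forall>i. 1 \<le> i \<and> i \<le> L \<longrightarrow> X i \<in> S \<and> X i \<noteq> 0 \<and> 0 \<le> gap X Q i)"

section \<open>Mechanisms and price ladders\<close>

lemma buyer_choice_in_unit_cube: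
  assumes "is_mechanism M" "buyer_choice M sel" "v \<in> nonneg_orthant"
  shows "fst (sel v) \<in> unit_cube"
  using assms unfolding is_mechanism_def buyer_choice_def by (auto simp: mem_Times_iff)

lemma buyer_choice_individually_rational:
  assumes "is_mechanism M" "buyer_choice M sel" "v \<in> nonneg_orthant"
  shows "snd (sel v) \<le> v \<bullet> fst (sel v)"
  using assms unfolding is_mechanism_def buyer_choice_def by fastforce

lemma buyer_choice_incentive_compatible:
  assumes "buyer_choice M sel" "v \<in> nonneg_orthant" "w \<in> nonneg_orthant"
  shows "v \<bullet> fst (sel w) - snd (sel w) \<le> v \<bullet> fst (sel v) - snd (sel v)"
  using assms unfolding buyer_choice_def by blast

lemma buyer_choice_price_le_l1norm:
  assumes "is_mechanism M" "buyer_choice M sel" "v \<in> nonneg_orthant"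
  shows "snd (sel v) \<le> l1norm v"
  using buyer_choice_individually_rational[OF assms]
    inner_le_l1norm[OF assms(3) buyer_choice_in_unit_cube[OF assms]] by linarith

lemma half_le_gap_of_price_ladder:
  assumes mech: "is_mechanism M" and choice: "buyer_choice M sel"
    and X: "\<And>j. 1 \<le> j \<Longrightarrow> j \<le> i \<Longrightarrow> X j \<in> nonneg_orthant"
    and Q: "Q 0 = 0" "\<And>j. 1 \<le> j \<Longrightarrow> j \<le> i \<Longrightarrow> Q j = fst (sel (X j))"
    and i: "1 \<le> i" and l: "0 \<le> l" "l \<le> snd (sel (X i))"
    and earlier: "\<And>j. 1 \<le> j \<Longrightarrow> j < i \<Longrightarrow> 2 * snd (sel (X j)) \<le> l"
  shows "l / 2 \<le> gap X Q i"
proof (rule le_gap)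
  show "0 < i" using i by simp
  fix j assume "j < i"
  show "l / 2 \<le> (Q i - Q j) \<bullet> X i"
  proof (cases "j = 0")
    case True
    then show ?thesis
      using buyer_choice_individually_rational[OF mech choice X[OF i order.refl]] Q i l
      by (simp add: inner_commute)
  next
    case False
    then have j: "1 \<le> j" "j \<le> i" using \<open>j < i\<close> by auto
    have "snd (sel (X i)) - snd (sel (X j)) \<le> (Q i - Q j) \<bullet> X i"
      using buyer_choice_incentive_compatible[OF choice X[OF i order.refl] X[OF j]] Q(2)[OF i order.refl] Q(2)[OF j]
      by (simp add: inner_commute inner_diff_right)
    then show ?thesis using earlier[OF j(1) \<open>j < i\<close>] l by linarith
  qed
qed

lemma sorted_list_of_set_nth_mem:
  assumes "finite J" "i < card J"
  shows "sorted_list_of_set J ! i \<in> J"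
  using assms by (metis length_sorted_list_of_set nth_mem set_sorted_list_of_set)

lemma sorted_list_of_set_nth_less:
  assumes "finite J" "j < i" "i < card J"
  shows "sorted_list_of_set J ! j < sorted_list_of_set J ! i"
  using sorted_wrt_nth_less[OF strict_sorted_list_of_set, of j i J] assms by simp

lemma sum_sorted_list_of_set_nth:
  assumes "finite J"
  shows "(\<Sum>n\<in>J. f n) = (\<Sum>i=1..card J. f (sorted_list_of_set J ! (i - 1)))"
proof -
  have "(\<Sum>n\<in>J. f n) = sum_list (map f (sorted_list_of_set J))"
    using assms by (simp add: sum_list_distinct_conv_sum_set)
  also have "\<dots> = (\<Sum>i<card J. f (sorted_list_of_set J ! i))"
    by (simp add: sum_list_sum_nth atLeast0LessThan)
  finally show ?thesis by (simp add: sum.atLeast1_atMost_eq)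
qed

text \<open>For points priced in dyadic bands two apart, listed by increasing band, the lower end of
  each band is at least twice every earlier price, so by incentive compatibility each gap is at least
  half that lower end.\<close>
lemma partial_menu_gap_of_price_ladder:
  fixes x :: "nat \<Rightarrow> real^'k"
  assumes mech: "is_mechanism M" and choice: "buyer_choice M sel"
    and J: "finite J" "\<And>m n. m \<in> J \<Longrightarrow> n \<in> J \<Longrightarrow> m < n \<Longrightarrow> m + 2 \<le> n"
    and a: "0 < a"
    and x: "\<And>n. n \<in> J \<Longrightarrow> x n \<in> nonneg_orthant"
    and price: "\<And>n. n \<in> J \<Longrightarrow> a * 2^n \<le> snd (sel (x n)) \<and> snd (sel (x n)) < 2 * (a * 2^n)"
  shows "\<exists>X Q. valid_Q Q \<and> (\<forall>i. 1 \<le> i \<and> i \<le> card J \<longrightarrow> X i \<in> x ` J \<and> X i \<noteq> 0 \<and> 0 \<le> gap X Q i)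
    \<and> (\<Sum>n\<in>J. a * 2^n / (2 * l1norm (x n))) \<le> partial_menu_gap X Q (card J)"
proof -
  define idx where "idx i = sorted_list_of_set J ! (i - 1)" for i
  define X where "X i = x (idx i)" for i
  define Q where "Q i = (if i = 0 \<or> card J < i then 0 else fst (sel (X i)))" for i
  define lev where "lev i = a * 2 ^ idx i" for i
  have idx: "idx i \<in> J" if "1 \<le> i" "i \<le> card J" for i
    using sorted_list_of_set_nth_mem[OF J(1)] that unfolding idx_def by simp
  have X: "X i \<in> nonneg_orthant" "lev i \<le> snd (sel (X i))" "snd (sel (X i)) < 2 * lev i"
    if "1 \<le> i" "i \<le> card J" for i
    using x[OF idx[OF that]] price[OF idx[OF that]] unfolding X_def lev_def by auto
  have lev_pos: "0 < lev i" for i unfolding lev_def using a by simp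
  have lev_sep: "4 * lev j \<le> lev i" if "1 \<le> j" "j < i" "i \<le> card J" for i j
  proof -
    have "idx j + 2 \<le> idx i"
      using J(2) idx sorted_list_of_set_nth_less[OF J(1), of "j - 1" "i - 1"] that
      unfolding idx_def by simp
    then have "(2::real) ^ (idx j + 2) \<le> 2 ^ idx i" by (rule power_increasing) simp
    then show ?thesis unfolding lev_def using a by (simp add: power_add)
  qed
  have gap: "lev i / 2 \<le> gap X Q i" if "1 \<le> i" "i \<le> card J" for i
  proof (rule half_le_gap_of_price_ladder[OF mech choice])
    show "2 * snd (sel (X j)) \<le> lev i" if "1 \<le> j" "j < i" for j
      using X(3)[of j] lev_sep[of j i] that \<open>i \<le> card J\<close> by simp
  qed (use that X less_imp_le[OF lev_pos] in \<open>simp_all add: Q_def\<close>)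
  have norm: "0 < l1norm (X i)" if "1 \<le> i" "i \<le> card J" for i
    using X(2)[OF that] buyer_choice_price_le_l1norm[OF mech choice X(1)[OF that]] lev_pos[of i]
    by linarith
  have "Q i \<in> unit_cube" for i
    using buyer_choice_in_unit_cube[OF mech choice X(1)[of i]] by (auto simp: Q_def unit_cube_def)
  then have "valid_Q Q" by (simp add: valid_Q_def Q_def)
  moreover have "X i \<in> x ` J \<and> X i \<noteq> 0 \<and> 0 \<le> gap X Q i" if "1 \<le> i" "i \<le> card J" for i
    using idx[OF that] gap[OF that] norm[OF that] lev_pos[of i] unfolding X_def by (auto simp: l1norm_def)
  moreover have "(\<Sum>n\<in>J. a * 2^n / (2 * l1norm (x n))) \<le> partial_menu_gap X Q (card J)"
    unfolding sum_sorted_list_of_set_nth[OF J(1)] partial_menu_gap_def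
  proof (rule sum_mono)
    fix i assume "i \<in> {1..card J}"
    then have "lev i / 2 \<le> gap X Q i" "0 < l1norm (X i)" using gap norm by auto
    then show "a * 2 ^ (sorted_list_of_set J ! (i - 1)) / (2 * l1norm (x (sorted_list_of_set J ! (i - 1))))
        \<le> gap X Q i / l1norm (X i)"
      unfolding lev_def X_def idx_def
      by (metis divide_divide_eq_left divide_right_mono less_imp_le mult.commute)
  qed
  ultimately show ?thesis by blast
qed

section \<open>Dyadic price bands\<close>

lemma exists_dyadic_band:
  fixes a x :: real
  assumes "0 < a" "a \<le> x" "x < a * 2^N"
  shows "\<exists>n<N. a * 2^n \<le> x \<and> x < 2 * (a * 2^n)"
  using assms(3)
proof (induction N)
  case 0
  then show ?case using assms(1,2) by simp
next
  case (Suc N)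
  show ?case
  proof (cases "x < a * 2^N")
    case True
    then show ?thesis using Suc.IH by (meson less_SucI)
  next
    case False
    then show ?thesis using Suc.prems by (auto simp: mult.commute mult.left_commute)
  qed
qed

lemma nn_integral_less_truncated:
  fixes p :: "'a \<Rightarrow> real"
  assumes "p \<in> borel_measurable D" "C < (\<integral>\<^sup>+ v. ennreal (p v) \<partial>D)"
  shows "\<exists>N::nat. C < (\<integral>\<^sup>+ v. ennreal (if inverse (2^N) \<le> p v \<and> p v < 2^N then p v else 0) \<partial>D)"
proof -
  define f where "f N v = ennreal (if inverse (2^N) \<le> p v \<and> p v < (2::real)^N then p v else 0)" for N v
  have "f N v \<le> f (Suc N) v" for N v
  proof -
    have "inverse ((2::real)^Suc N) \<le> inverse (2^N)" "(2::real)^N \<le> 2^Suc N"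
      by (simp_all add: field_simps)
    then have "inverse (2^N) \<le> p v \<and> p v < 2^N \<Longrightarrow> inverse (2^Suc N) \<le> p v \<and> p v < 2^Suc N"
      by linarith
    then show ?thesis unfolding f_def by auto
  qed
  then have "incseq f" by (intro incseq_SucI le_funI)
  moreover have "f N \<in> borel_measurable D" for N
    unfolding f_def using assms(1) by measurable
  moreover have "(SUP N. f N v) = ennreal (p v)" for v
  proof (rule antisym)
    show "(SUP N. f N v) \<le> ennreal (p v)"
      unfolding f_def by (rule SUP_least) (auto intro: ennreal_leI)
    show "ennreal (p v) \<le> (SUP N. f N v)"
    proof (cases "0 < p v")
      case True
      obtain N where "p v < 2^N" "inverse (p v) < 2^N"
        using real_arch_pow[of 2 "max (p v) (inverse (p v))"] by auto
      then have "f N v = ennreal (p v)"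
        using True unfolding f_def by (simp add: inverse_le_imp_le less_imp_le)
      then show ?thesis by (metis SUP_upper UNIV_I)
    qed (simp add: ennreal_neg)
  qed
  ultimately have "(\<integral>\<^sup>+ v. ennreal (p v) \<partial>D) = (SUP N. integral\<^sup>N D (f N))"
    using nn_integral_monotone_convergence_SUP[of f D] by simp
  then show ?thesis
    using assms(2) unfolding f_def by (auto simp: less_SUP_iff)
qed

definition dyadic_band :: "'a measure \<Rightarrow> ('a \<Rightarrow> real) \<Rightarrow> real \<Rightarrow> nat \<Rightarrow> 'a set" where
  "dyadic_band D p a n = {v\<in>space D. a * 2^n \<le> p v \<and> p v < 2 * (a * 2^n)}"

lemma dyadic_band_in_sets:
  assumes "p \<in> borel_measurable D"
  shows "dyadic_band D p a n \<in> sets D"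
  unfolding dyadic_band_def using assms by measurable

lemma nn_integral_truncated_le_dyadic_bands:
  fixes p :: "'a \<Rightarrow> real"
  assumes "finite_measure D" "p \<in> borel_measurable D" "0 < a"
  shows "(\<integral>\<^sup>+ v. ennreal (if a \<le> p v \<and> p v < a * 2^N then p v else 0) \<partial>D)
    \<le> ennreal (\<Sum>n<N. 2 * (a * 2^n) * measure D (dyadic_band D p a n))"
proof -
  let ?B = "dyadic_band D p a"
  have B: "?B n \<in> sets D" for n using assms(2) by (rule dyadic_band_in_sets)
  have "ennreal (if a \<le> p v \<and> p v < a * 2^N then p v else 0)
      \<le> (\<Sum>n<N. ennreal (2 * (a * 2^n)) * indicator (?B n) v)" if "v \<in> space D" for v
  proof (cases "a \<le> p v \<and> p v < a * 2^N")
    case True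
    then obtain n where n: "n < N" "a * 2^n \<le> p v" "p v < 2 * (a * 2^n)"
      using exists_dyadic_band[OF assms(3)] by blast
    then have "ennreal (p v) \<le> ennreal (2 * (a * 2^n)) * indicator (?B n) v"
      using that by (simp add: dyadic_band_def ennreal_leI)
    also have "\<dots> \<le> (\<Sum>n<N. ennreal (2 * (a * 2^n)) * indicator (?B n) v)"
      by (rule member_le_sum) (use n in auto)
    finally show ?thesis using True by simp
  qed auto
  then have "(\<integral>\<^sup>+ v. ennreal (if a \<le> p v \<and> p v < a * 2^N then p v else 0) \<partial>D)
      \<le> (\<integral>\<^sup>+ v. (\<Sum>n<N. ennreal (2 * (a * 2^n)) * indicator (?B n) v) \<partial>D)"
    by (rule nn_integral_mono)
  also have "\<dots> = (\<Sum>n<N. \<integral>\<^sup>+ v. ennreal (2 * (a * 2^n)) * indicator (?B n) v \<partial>D)"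
    by (rule nn_integral_sum) (use B in measurable)
  also have "\<dots> = (\<Sum>n<N. ennreal (2 * (a * 2^n) * measure D (?B n)))"
    using B assms(3) finite_measure.emeasure_eq_measure[OF assms(1)]
    by (intro sum.cong) (auto simp: nn_integral_cmult_indicator ennreal_mult)
  also have "\<dots> = ennreal (\<Sum>n<N. 2 * (a * 2^n) * measure D (?B n))"
    using assms(3) by (intro sum_ennreal) auto
  finally show ?thesis .
qed

lemma nn_integral_less_dyadic_bands:
  fixes p :: "'a \<Rightarrow> real"
  assumes "finite_measure D" "p \<in> borel_measurable D" "0 \<le> C"
    and "ennreal C < (\<integral>\<^sup>+ v. ennreal (p v) \<partial>D)"
  shows "\<exists>a>0. \<exists>N. C < (\<Sum>n<N. 2 * (a * 2^n) * measure D (dyadic_band D p a n))"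
proof -
  obtain K :: nat where
      K: "ennreal C < (\<integral>\<^sup>+ v. ennreal (if inverse (2^K) \<le> p v \<and> p v < 2^K then p v else 0) \<partial>D)"
    using nn_integral_less_truncated[OF assms(2,4)] by blast
  have "(2::real)^(2*K) = 2^K * 2^K"
    by (simp add: mult_2 power_add)
  then have "inverse (2^K) * 2^(2*K) = (2::real)^K"
    by simp
  then have "ennreal C < ennreal (\<Sum>n<2*K. 2 * (inverse (2^K) * 2^n) * measure D (dyadic_band D p (inverse (2^K)) n))"
    using K nn_integral_truncated_le_dyadic_bands[OF assms(1,2), of "inverse (2^K)" "2*K"]
    by simp
  then show ?thesis
    using assms(3) by (intro exI[of _ "inverse (2^K)"]) (auto simp: ennreal_less_iff)
qed

lemma exists_parity_class_sum_gt:
  fixes t :: "nat \<Rightarrow> real"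
  assumes "s < (\<Sum>n<N. t n)"
  shows "\<exists>r. s / 2 < (\<Sum>n\<in>{n\<in>{..<N}. n mod 2 = r}. t n)"
proof -
  have "(\<Sum>n<N. t n) = (\<Sum>n\<in>{n\<in>{..<N}. n mod 2 = 0}. t n) + (\<Sum>n\<in>{n\<in>{..<N}. n mod 2 = 1}. t n)"
    by (subst sum.union_disjoint[symmetric]) (auto intro!: sum.cong)
  then have "s / 2 < (\<Sum>n\<in>{n\<in>{..<N}. n mod 2 = 0}. t n) \<or> s / 2 < (\<Sum>n\<in>{n\<in>{..<N}. n mod 2 = 1}. t n)"
    using assms by linarith
  then show ?thesis by blast
qed

text \<open>Bands of the same parity are two apart, so their prices differ by a factor of at least four.\<close>
lemma exists_sparse_dyadic_bands:
  fixes p :: "'a \<Rightarrow> real"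
  assumes "finite_measure D" "p \<in> borel_measurable D" "0 \<le> C"
    and "ennreal C < (\<integral>\<^sup>+ v. ennreal (p v) \<partial>D)"
  shows "\<exists>a>0. \<exists>J. finite J \<and> (\<forall>m\<in>J. \<forall>n\<in>J. m < n \<longrightarrow> m + 2 \<le> n)
    \<and> (\<forall>n\<in>J. 0 < measure D (dyadic_band D p a n))
    \<and> C / 2 < (\<Sum>n\<in>J. 2 * (a * 2^n) * measure D (dyadic_band D p a n))"
proof -
  obtain a N where a: "0 < a" and N: "C < (\<Sum>n<N. 2 * (a * 2^n) * measure D (dyadic_band D p a n))"
    using nn_integral_less_dyadic_bands[OF assms] by blast
  define t where "t n = 2 * (a * 2^n) * measure D (dyadic_band D p a n)" for n
  obtain r where r: "C / 2 < (\<Sum>n\<in>{n\<in>{..<N}. n mod 2 = r}. t n)"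
    using exists_parity_class_sum_gt[of C t N] N unfolding t_def by blast
  define J where "J = {n\<in>{..<N}. n mod 2 = r \<and> 0 < measure D (dyadic_band D p a n)}"
  have "t n = 0" if "n \<in> {n\<in>{..<N}. n mod 2 = r} - J" for n
    using that measure_nonneg[of D "dyadic_band D p a n"] unfolding J_def t_def by auto
  then have "(\<Sum>n\<in>{n\<in>{..<N}. n mod 2 = r}. t n) = (\<Sum>n\<in>J. t n)"
    by (intro sum.mono_neutral_right) (auto simp: J_def)
  then have "C / 2 < (\<Sum>n\<in>J. t n)" using r by simp
  moreover have "\<forall>m\<in>J. \<forall>n\<in>J. m < n \<longrightarrow> m + 2 \<le> n"
  proof (intro ballI impI)
    fix m n assume "m \<in> J" "n \<in> J" "m < n"
    then have "m mod 2 = n mod 2" unfolding J_def by simp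
    then show "m + 2 \<le> n" using \<open>m < n\<close> by presburger
  qed
  moreover have "finite J" "\<forall>n\<in>J. 0 < measure D (dyadic_band D p a n)"
    unfolding J_def by simp_all
  ultimately show ?thesis using a unfolding t_def by blast
qed

section \<open>Concatenating menus\<close>

definition block_start :: "(nat \<Rightarrow> nat) \<Rightarrow> nat \<Rightarrow> nat" where
  "block_start L k = (\<Sum>m<k. L m)"

definition block_index :: "(nat \<Rightarrow> nat) \<Rightarrow> nat \<Rightarrow> nat" where
  "block_index L i = (LEAST k. i \<le> block_start L (Suc k))"

lemma block_start_Suc: "block_start L (Suc k) = block_start L k + L k"
  unfolding block_start_def by simp

lemma strict_mono_block_start: "(\<And>k. 1 \<le> L k) \<Longrightarrow> strict_mono (block_start L)"
  by (intro strict_monoI_Suc) (simp add: block_start_Suc Suc_le_eq)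

lemma block_index_bounds:
  assumes L: "\<And>k. 1 \<le> L k" and i: "1 \<le> i"
  shows "block_start L (block_index L i) < i" "i \<le> block_start L (Suc (block_index L i))"
proof -
  have "Suc i \<le> block_start L (Suc i)"
    by (rule strict_mono_imp_increasing[OF strict_mono_block_start[where L = L, OF L]])
  then have "i \<le> block_start L (Suc i)" by simp
  then show "i \<le> block_start L (Suc (block_index L i))"
    unfolding block_index_def by (rule LeastI)
  show "block_start L (block_index L i) < i"
  proof (cases "block_index L i")
    case 0
    then show ?thesis using i by (simp add: block_start_def)
  next
    case (Suc k)
    then have "\<not> i \<le> block_start L (Suc k)"
      using not_less_Least[of k "\<lambda>k. i \<le> block_start L (Suc k)"] unfolding block_index_def by simp
    then show ?thesis using Suc by simp
  qed
qed

lemma block_index_eqI: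
  assumes L: "\<And>k. 1 \<le> L k" and i: "block_start L k < i" "i \<le> block_start L (Suc k)"
  shows "block_index L i = k"
proof -
  have "block_index L i \<le> k" unfolding block_index_def using i(2) by (rule Least_le)
  moreover have "\<not> block_index L i < k"
  proof
    assume "block_index L i < k"
    then have "block_start L (Suc (block_index L i)) \<le> block_start L k"
      using strict_mono_block_start[where L = L, OF L] by (simp add: strict_mono_less_eq)
    moreover have "1 \<le> i" using i(1) by simp
    ultimately show False using block_index_bounds(2)[where L = L, OF L \<open>1 \<le> i\<close>] i(1) by linarith
  qed
  ultimately show ?thesis by simp
qed

lemma block_index_order:
  assumes L: "\<And>k. 1 \<le> L k" and j: "1 \<le> j" "j < i"
  shows "block_index L j < block_index L i \<or>
    (block_index L j = block_index L i \<and> j - block_start L (block_index L j) < i - block_start L (block_index L i))"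
proof -
  have "\<not> block_index L i < block_index L j"
  proof
    assume "block_index L i < block_index L j"
    then have "block_start L (Suc (block_index L i)) \<le> block_start L (block_index L j)"
      using strict_mono_block_start[where L = L, OF L] by (simp add: strict_mono_less_eq)
    moreover have "1 \<le> i" using j by simp
    ultimately show False
      using block_index_bounds(2)[where L = L, OF L \<open>1 \<le> i\<close>]
        block_index_bounds(1)[where L = L, OF L j(1)] j(2) by linarith
  qed
  then consider "block_index L j < block_index L i" | "block_index L j = block_index L i"
    by linarith
  then show ?thesis
  proof cases
    case 2
    then show ?thesis
      using block_index_bounds(1)[where L = L, OF L j(1)] j(2) by (simp add: diff_less_mono)
  qed simp
qed

text \<open>Block k is placed at the allocation level 1 - 2^-k and shrunk by 2^-(k+1), so
  it lies above every allocation of the earlier blocks while keeping its own gaps up to that factor.\<close>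
definition shift_alloc :: "nat \<Rightarrow> real^'k \<Rightarrow> real^'k" where
  "shift_alloc k q = (\<chi> t. 1 - (1/2)^k + (1/2)^Suc k * q $ t)"

lemma shift_alloc_in_unit_cube:
  assumes "q \<in> unit_cube"
  shows "shift_alloc k q \<in> unit_cube"
proof -
  have q: "0 \<le> (1/2)^Suc k * q $ t" "(1/2)^Suc k * q $ t \<le> (1/2::real)^Suc k" for t
    using assms unfolding unit_cube_def by (simp_all add: mult_left_le)
  have h: "(1/2::real)^Suc k \<le> (1/2)^k" "(1/2::real)^k \<le> 1"
    by (simp_all add: power_le_one)
  have "0 \<le> shift_alloc k q $ t \<and> shift_alloc k q $ t \<le> 1" for t
    using q[of t] h unfolding shift_alloc_def by simp
  then show ?thesis unfolding unit_cube_def by simp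
qed

lemma shift_alloc_diff: "shift_alloc k q - shift_alloc k q' = (1/2)^Suc k *\<^sub>R (q - q')"
  unfolding shift_alloc_def by (simp add: vec_eq_iff algebra_simps)

lemma shift_alloc_nth: "shift_alloc k q $ t = 1 - (1/2)^k + (1/2)^Suc k * q $ t"
  unfolding shift_alloc_def by simp

lemma shift_alloc_nth_ge: "(1/2)^Suc k * q $ t \<le> shift_alloc k q $ t"
  using shift_alloc_nth[of k q t] power_le_one[of "1/2::real" k] by simp

lemma shift_alloc_nth_diff_ge:
  assumes "k' < k" "q' \<in> unit_cube"
  shows "(1/2)^Suc k * q $ t \<le> shift_alloc k q $ t - shift_alloc k' q' $ t"
proof -
  have "(1/2::real)^Suc k' * q' $ t \<le> (1/2)^Suc k'"
    using assms(2) unfolding unit_cube_def by (simp add: mult_left_le)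
  moreover have "(1/2::real)^k \<le> (1/2)^Suc k'"
    using assms(1) by (intro power_decreasing) auto
  moreover have "(1/2::real)^Suc k' = (1/2)^k' / 2" by simp
  ultimately show ?thesis using shift_alloc_nth[of k' q' t] shift_alloc_nth[of k q t] by linarith
qed

lemma gap_of_shifted_blocks:
  fixes Xb Qb :: "nat \<Rightarrow> nat \<Rightarrow> real^'k" and blk loc :: "nat \<Rightarrow> nat"
  assumes i: "1 \<le> i" "1 \<le> loc i" and x: "X i = Xb (blk i) (loc i)" "X i \<in> nonneg_orthant"
    and cube: "\<And>k j. Qb k j \<in> unit_cube" and Qb0: "Qb (blk i) 0 = 0"
    and Q: "Q 0 = 0" "\<And>j. 1 \<le> j \<Longrightarrow> Q j = shift_alloc (blk j) (Qb (blk j) (loc j))"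
    and order: "\<And>j. 1 \<le> j \<Longrightarrow> j < i \<Longrightarrow> blk j < blk i \<or> (blk j = blk i \<and> loc j < loc i)"
  shows "(1/2)^Suc (blk i) * gap (Xb (blk i)) (Qb (blk i)) (loc i) \<le> gap X Q i"
proof -
  define k where "k = blk i"
  define q where "q = Qb k (loc i)"
  define G where "G = gap (Xb k) (Qb k) (loc i)"
  have Qi: "Q i = shift_alloc k q" using Q(2)[OF i(1)] by (simp add: k_def q_def)
  have "G \<le> q \<bullet> X i"
    using gap_le[of 0 "loc i", where X = "Xb k" and Q = "Qb k"] i x(1) Qb0 by (simp add: G_def k_def q_def)
  then have G_le: "(1/2)^Suc k * G \<le> ((1/2)^Suc k *\<^sub>R q) \<bullet> X i"
    by (simp add: mult_left_mono)
  show ?thesis unfolding k_def[symmetric] G_def[symmetric]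
  proof (rule le_gap)
    show "0 < i" using i by simp
    fix j assume "j < i"
    consider "\<And>t. (1/2)^Suc k * q $ t \<le> (Q i - Q j) $ t" | "1 \<le> j" "blk j = k" "loc j < loc i"
    proof (cases "j = 0")
      case True
      show ?thesis
        by (rule that(1)) (simp only: True Qi Q(1) diff_zero shift_alloc_nth_ge)
    next
      case False
      then have j: "1 \<le> j" by simp
      then consider "blk j < k" | "blk j = k" "loc j < loc i"
        using order \<open>j < i\<close> unfolding k_def by blast
      then show ?thesis
      proof cases
        case 1
        show ?thesis
          by (rule that(1)) (simp only: Qi Q(2)[OF j] vector_minus_component shift_alloc_nth_diff_ge[OF 1 cube])
      qed (use that(2) j in blast)
    qed
    then show "(1/2)^Suc k * G \<le> (Q i - Q j) \<bullet> X i"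
    proof cases
      case 1
      then have "((1/2)^Suc k *\<^sub>R q) \<bullet> X i \<le> (Q i - Q j) \<bullet> X i"
        by (intro inner_le_inner_nonneg_orthant[OF _ x(2)]) simp
      then show ?thesis using G_le by linarith
    next
      case 2
      have "G \<le> (q - Qb k (loc j)) \<bullet> X i"
        using gap_le[OF 2(3), where X = "Xb k" and Q = "Qb k"] x(1) by (simp add: G_def k_def q_def)
      moreover have "Q i - Q j = (1/2)^Suc k *\<^sub>R (q - Qb k (loc j))"
        using Qi Q(2)[OF 2(1)] 2(2) shift_alloc_diff by metis
      ultimately show ?thesis by (simp add: mult_left_mono)
    qed
  qed
qed

locale menu_block_sequence =
  fixes S :: "(real^'k) set" and L :: "nat \<Rightarrow> nat" and Xb Qb :: "nat \<Rightarrow> nat \<Rightarrow> real^'k"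
  assumes S_subset: "S \<subseteq> nonneg_orthant"
    and block: "\<And>k. menu_block S (L k) (Xb k) (Qb k)"
    and large: "\<And>k. 2 ^ Suc k \<le> partial_menu_gap (Xb k) (Qb k) (L k)"
begin

definition offset :: "nat \<Rightarrow> nat" where
  "offset i = i - block_start L (block_index L i)"

definition concat_points :: "nat \<Rightarrow> real^'k" where
  "concat_points i = Xb (block_index L i) (offset i)"

definition concat_allocs :: "nat \<Rightarrow> real^'k" where
  "concat_allocs i = (if i = 0 then 0 else shift_alloc (block_index L i) (Qb (block_index L i) (offset i)))"

lemma block_length_pos: "1 \<le> L k"
proof (rule ccontr)
  assume "\<not> 1 \<le> L k"
  then have "partial_menu_gap (Xb k) (Qb k) (L k) = 0" by (simp add: partial_menu_gap_def)
  moreover have "(0::real) < 2 ^ Suc k" by simp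
  ultimately show False using large[of k] by linarith
qed

lemma offset_bounds: "1 \<le> i \<Longrightarrow> 1 \<le> offset i \<and> offset i \<le> L (block_index L i)"
  using block_index_bounds[where L = L, OF block_length_pos] unfolding offset_def block_start_Suc
  by fastforce

lemma index_offset_in_block:
  assumes "1 \<le> j" "j \<le> L k"
  shows "block_index L (j + block_start L k) = k" "offset (j + block_start L k) = j"
proof -
  show "block_index L (j + block_start L k) = k"
    using assms by (intro block_index_eqI[OF block_length_pos]) (auto simp: block_start_Suc)
  then show "offset (j + block_start L k) = j" by (simp add: offset_def)
qed

lemma block_facts:
  "Qb k j \<in> unit_cube" "Qb k 0 = 0"
  "1 \<le> j \<Longrightarrow> j \<le> L k \<Longrightarrow> Xb k j \<in> S \<and> Xb k j \<noteq> 0 \<and> 0 \<le> gap (Xb k) (Qb k) j"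
  using block[of k] unfolding menu_block_def valid_Q_def by auto

lemma concat_points_in: "1 \<le> i \<Longrightarrow> concat_points i \<in> S \<and> concat_points i \<noteq> 0"
  using block_facts(3) offset_bounds unfolding concat_points_def by blast

lemma valid_Q_concat_allocs: "valid_Q concat_allocs"
  unfolding valid_Q_def concat_allocs_def
  by (simp add: zero_in_unit_cube shift_alloc_in_unit_cube block_facts(1))

lemma gap_concat_ge:
  assumes "1 \<le> i"
  shows "(1/2)^Suc (block_index L i) * gap (Xb (block_index L i)) (Qb (block_index L i)) (offset i)
    \<le> gap concat_points concat_allocs i"
proof (rule gap_of_shifted_blocks[where Xb = Xb and Qb = Qb])
  show "concat_points i \<in> nonneg_orthant" using concat_points_in[OF assms] S_subset by blast
  show "block_index L j < block_index L i \<or> block_index L j = block_index L i \<and> offset j < offset i"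
    if "1 \<le> j" "j < i" for j
    using block_index_order[where L = L, OF block_length_pos that] unfolding offset_def .
qed (use assms offset_bounds[OF assms] block_facts(1,2) in \<open>simp_all add: concat_allocs_def concat_points_def\<close>)

lemma concat_summand_ge:
  assumes i: "1 \<le> i"
  defines "k \<equiv> block_index L i"
  shows "(1/2)^Suc k * (gap (Xb k) (Qb k) (offset i) / l1norm (Xb k (offset i)))
    \<le> gap concat_points concat_allocs i / l1norm (concat_points i)"
    and "0 \<le> gap concat_points concat_allocs i / l1norm (concat_points i)"
proof -
  have "0 < l1norm (concat_points i)" using concat_points_in[OF i] by (simp add: l1norm_pos)
  then have "(1/2)^Suc k * gap (Xb k) (Qb k) (offset i) / l1norm (concat_points i)
      \<le> gap concat_points concat_allocs i / l1norm (concat_points i)"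
    using gap_concat_ge[OF i] unfolding k_def by (intro divide_right_mono) auto
  then show "(1/2)^Suc k * (gap (Xb k) (Qb k) (offset i) / l1norm (Xb k (offset i)))
      \<le> gap concat_points concat_allocs i / l1norm (concat_points i)"
    by (simp add: concat_points_def k_def)
  moreover have "0 \<le> (1/2)^Suc k * (gap (Xb k) (Qb k) (offset i) / l1norm (Xb k (offset i)))"
    using block_facts(3)[of "offset i" k] offset_bounds[OF i] unfolding k_def l1norm_def
    by (intro mult_nonneg_nonneg divide_nonneg_nonneg) (simp_all add: sum_nonneg)
  ultimately show "0 \<le> gap concat_points concat_allocs i / l1norm (concat_points i)" by linarith
qed

lemma concat_block_sum_ge_one:
  "1 \<le> (\<Sum>i = block_start L k + 1..block_start L (Suc k). gap concat_points concat_allocs i / l1norm (concat_points i))"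
proof -
  define f where "f i = gap concat_points concat_allocs i / l1norm (concat_points i)" for i
  have "1 = (1/2::real)^Suc k * 2 ^ Suc k" by (simp add: power_one_over)
  also have "\<dots> \<le> (1/2)^Suc k * partial_menu_gap (Xb k) (Qb k) (L k)"
    using large[of k] by (intro mult_left_mono) simp_all
  also have "\<dots> = (\<Sum>j = 1..L k. (1/2)^Suc k * (gap (Xb k) (Qb k) j / l1norm (Xb k j)))"
    unfolding partial_menu_gap_def by (simp add: sum_distrib_left)
  also have "\<dots> \<le> (\<Sum>j = 1..L k. f (j + block_start L k))"
  proof (rule sum_mono)
    fix j assume "j \<in> {1..L k}"
    then show "(1/2)^Suc k * (gap (Xb k) (Qb k) j / l1norm (Xb k j)) \<le> f (j + block_start L k)"
      using concat_summand_ge(1)[of "j + block_start L k"] index_offset_in_block[of j k]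
      unfolding f_def by simp
  qed
  also have "\<dots> = (\<Sum>i = block_start L k + 1..block_start L (Suc k). f i)"
    using sum.shift_bounds_cl_nat_ivl[of f 1 "block_start L k" "L k"]
    by (simp add: block_start_Suc add.commute)
  finally show ?thesis unfolding f_def .
qed

lemma partial_menu_gap_concat_ge: "real k \<le> partial_menu_gap concat_points concat_allocs (block_start L k)"
proof (induction k)
  case (Suc k)
  have "partial_menu_gap concat_points concat_allocs (block_start L (Suc k))
      = partial_menu_gap concat_points concat_allocs (block_start L k)
        + (\<Sum>i = block_start L k + 1..block_start L (Suc k). gap concat_points concat_allocs i / l1norm (concat_points i))"
    unfolding partial_menu_gap_def block_start_Suc by (rule sum.ub_add_nat) simp
  then show ?case using Suc concat_block_sum_ge_one[of k] by simp
qed (simp add: partial_menu_gap_def block_start_def)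

lemma menu_gap_concat_points: "menu_gap \<infinity> concat_points = \<infinity>"
proof -
  have "menu_gap_Q \<infinity> concat_points concat_allocs = \<infinity>"
    using concat_summand_ge(2) partial_menu_gap_concat_ge by (intro menu_gap_Q_infinity_eq_infinity) blast+
  then show ?thesis
    using menu_gap_Q_le_menu_gap[OF valid_Q_concat_allocs, of \<infinity> concat_points] by simp
qed

end

section \<open>Distributions with finite bundle revenue\<close>

lemma compl_supp_eq_Union_null_balls:
  fixes D :: "(real^'k) measure"
  assumes "sets D = sets borel"
  shows "- supp D = \<Union>{ball x e | x e. 0 < e \<and> emeasure D (ball x e) = 0}"
proof
  show "- supp D \<subseteq> \<Union>{ball x e | x e. 0 < e \<and> emeasure D (ball x e) = 0}"
  proof
    fix x assume "x \<in> - supp D"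
    then obtain e where "0 < e" "emeasure D (ball x e) = 0" unfolding supp_def by (auto simp: not_less)
    then show "x \<in> \<Union>{ball x e | x e. 0 < e \<and> emeasure D (ball x e) = 0}" by force
  qed
  show "\<Union>{ball x e | x e. 0 < e \<and> emeasure D (ball x e) = 0} \<subseteq> - supp D"
  proof
    fix y assume "y \<in> \<Union>{ball x e | x e. 0 < e \<and> emeasure D (ball x e) = 0}"
    then obtain x e where e: "emeasure D (ball x e) = 0" "y \<in> ball x e" by auto
    define d where "d = e - dist x y"
    have "ball y d \<subseteq> ball x e"
    proof
      fix z assume "z \<in> ball y d"
      then show "z \<in> ball x e" using dist_triangle[of x z y] unfolding d_def by simp
    qed
    then have "emeasure D (ball y d) \<le> emeasure D (ball x e)"
      by (intro emeasure_mono) (use assms in auto)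
    moreover have "0 < d" using e(2) by (simp add: d_def)
    ultimately show "y \<in> - supp D" using e(1) unfolding supp_def by auto
  qed
qed

lemma null_sets_compl_supp:
  fixes D :: "(real^'k) measure"
  assumes "sets D = sets borel"
  shows "- supp D \<in> null_sets D"
proof -
  let ?F = "{ball x e | x e. 0 < e \<and> emeasure D (ball x e) = 0}"
  obtain F' where F': "F' \<subseteq> ?F" "countable F'" "\<Union>F' = \<Union>?F"
    by (rule Lindelof[of ?F]) auto
  have "(\<Union>B\<in>F'. B) \<in> null_sets D"
  proof (rule null_sets_UN')
    show "countable F'" by fact
    fix B assume "B \<in> F'"
    then obtain x e where "B = ball x e" "emeasure D (ball x e) = 0" using F' by blast
    then show "B \<in> null_sets D" using assms by (auto simp: null_sets_def)
  qed
  then show ?thesis using compl_supp_eq_Union_null_balls[OF assms] F' by simp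
qed

lemma band_term_le:
  fixes b l y P :: real
  assumes "0 < b" "0 < l" "0 \<le> y" "P * l \<le> 17/16 * b"
  shows "2 * y * P * (4 / (17 * b)) \<le> y / (2 * l)"
proof -
  have "16 * (P * l) * y \<le> 17 * b * y" using assms by (intro mult_right_mono) auto
  then show ?thesis using assms by (simp add: field_simps)
qed

locale valuation_distribution = prob_space D for D :: "(real^'k) measure" +
  fixes b :: real
  assumes sets_eq_borel: "sets D = sets borel"
    and emeasure_nonneg_orthant: "emeasure D nonneg_orthant = 1"
    and BRev_eq: "BRev D = ereal b"
    and BRev_pos: "0 < b"
begin

lemma space_eq_UNIV: "space D = UNIV"
  using sets_eq_imp_space_eq[OF sets_eq_borel] by simp

lemma supp_subset_nonneg_orthant: "supp D \<subseteq> nonneg_orthant"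
proof
  fix x assume x: "x \<in> supp D"
  have orthant: "nonneg_orthant \<in> sets D"
    using borel_closed[OF closed_nonneg_orthant] sets_eq_borel by simp
  have "emeasure D (- nonneg_orthant) = 0"
    using emeasure_compl[OF orthant] emeasure_nonneg_orthant emeasure_space_1
    by (simp add: space_eq_UNIV Compl_eq_Diff_UNIV)
  show "x \<in> nonneg_orthant"
  proof (rule ccontr)
    assume "x \<notin> nonneg_orthant"
    then obtain i where i: "x $ i < 0" unfolding nonneg_orthant_def by (auto simp: not_le)
    have "ball x (- x $ i) \<subseteq> - nonneg_orthant"
    proof
      fix y assume "y \<in> ball x (- x $ i)"
      then have "\<bar>x $ i - y $ i\<bar> < - x $ i"
        by (metis dist_real_def dist_vec_nth_le mem_ball order_le_less_trans)
      then have "y $ i < 0" by linarith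
      then show "y \<in> - nonneg_orthant" unfolding nonneg_orthant_def by (auto simp: not_le)
    qed
    then have "emeasure D (ball x (- x $ i)) \<le> emeasure D (- nonneg_orthant)"
      by (rule emeasure_mono) (metis orthant sets.compl_sets space_eq_UNIV Compl_eq_Diff_UNIV)
    moreover have "0 < emeasure D (ball x (- x $ i))" using x i unfolding supp_def by auto
    ultimately show False using \<open>emeasure D (- nonneg_orthant) = 0\<close> by simp
  qed
qed

lemma bundle_price_revenue_le:
  assumes "0 \<le> p"
  shows "p * measure D {v\<in>space D. p \<le> (\<Sum>i\<in>UNIV. v $ i)} \<le> b"
proof -
  have "ereal (p * measure D {v\<in>space D. p \<le> (\<Sum>i\<in>UNIV. v $ i)}) \<le> BRev D"
    unfolding BRev_def using assms by (intro SUP_upper) auto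
  then show ?thesis using BRev_eq by simp
qed

text \<open>If every support point of A had a grand-bundle value above \<kappa>b / P(A), then pricing the
  bundle at that value would sell with probability at least P(A) and earn more than BRev.\<close>
lemma exists_supp_point_small_l1norm:
  assumes A: "A \<in> sets D" "0 < measure D A" and "1 < \<kappa>"
  shows "\<exists>x\<in>A \<inter> supp D. measure D A * l1norm x \<le> \<kappa> * b"
proof (rule ccontr)
  assume "\<not> ?thesis"
  then have large: "\<kappa> * b < measure D A * l1norm x" if "x \<in> A \<inter> supp D" for x
    using that by (auto simp: not_le)
  define s where "s = \<kappa> * b / measure D A"
  define S where "S = {v\<in>space D. s \<le> (\<Sum>i\<in>UNIV. v $ i)}"
  have S: "S \<in> sets D"
  proof -
    have "(\<lambda>v::real^'k. \<Sum>i\<in>UNIV. v $ i) \<in> borel_measurable borel" by measurable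
    then have "(\<lambda>v::real^'k. \<Sum>i\<in>UNIV. v $ i) \<in> borel_measurable D"
      using measurable_cong_sets[OF sets_eq_borel refl] by blast
    then show ?thesis unfolding S_def by measurable
  qed
  have "A \<subseteq> S \<union> - supp D"
  proof
    fix x assume "x \<in> A"
    show "x \<in> S \<union> - supp D"
    proof (cases "x \<in> supp D")
      case True
      then have "s < l1norm x"
        using large \<open>x \<in> A\<close> A(2) unfolding s_def by (simp add: field_simps mult.commute)
      moreover have "l1norm x = (\<Sum>i\<in>UNIV. x $ i)"
        using True supp_subset_nonneg_orthant l1norm_eq_sum by blast
      ultimately show ?thesis unfolding S_def space_eq_UNIV by simp
    qed simp
  qed
  then have "measure D A \<le> measure D (S \<union> - supp D)"
    using S null_sets_compl_supp[OF sets_eq_borel] by (intro finite_measure_mono) auto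
  also have "\<dots> = measure D S"
    using S null_sets_compl_supp[OF sets_eq_borel] by (simp add: measure_Un_null_set)
  finally have "s * measure D A \<le> s * measure D S"
    using A(2) BRev_pos \<open>1 < \<kappa>\<close> unfolding s_def by (intro mult_left_mono) auto
  also have "\<dots> \<le> b"
    using bundle_price_revenue_le[of s] A(2) BRev_pos \<open>1 < \<kappa>\<close> unfolding S_def s_def by simp
  finally show False
    using A(2) BRev_pos \<open>1 < \<kappa>\<close> unfolding s_def by simp
qed

text \<open>The constant 17/2 collects the losses of the construction: 1/2 from keeping the bands
  of one parity, 1/4 from bounding each gap by half the lower end of its band, and 16/17 from the
  choice of the support points. It is below the 9 of the theorem.\<close>
lemma exists_menu_block:
  assumes mech: "is_mechanism M" and choice: "buyer_choice M sel"
    and meas: "(\<lambda>v. snd (sel v)) \<in> borel_measurable D"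
    and c: "0 < c" and rev: "ennreal (17/2 * b * c) < (\<integral>\<^sup>+ v. ennreal (snd (sel v)) \<partial>D)"
  shows "\<exists>L X Q. menu_block (supp D) L X Q \<and> c \<le> partial_menu_gap X Q L"
proof -
  let ?B = "dyadic_band D (\<lambda>v. snd (sel v))"
  have "finite_measure D" using prob_space_axioms by (simp add: prob_space_def)
  moreover have "0 \<le> 17/2 * b * c" using c BRev_pos by simp
  ultimately obtain a J where a: "0 < a" and J: "finite J" "\<forall>m\<in>J. \<forall>n\<in>J. m < n \<longrightarrow> m + 2 \<le> n"
      "\<forall>n\<in>J. 0 < measure D (?B a n)"
      and mass: "17/2 * b * c / 2 < (\<Sum>n\<in>J. 2 * (a * 2^n) * measure D (?B a n))"
    using exists_sparse_dyadic_bands[OF _ meas _ rev] by blast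
  have "\<exists>y. n \<in> J \<longrightarrow> y \<in> ?B a n \<inter> supp D \<and> measure D (?B a n) * l1norm y \<le> 17/16 * b" for n
    using exists_supp_point_small_l1norm[OF dyadic_band_in_sets[OF meas], of a n "17/16"] J(3) by auto
  then obtain x where
      x: "\<And>n. n \<in> J \<Longrightarrow> x n \<in> ?B a n \<inter> supp D \<and> measure D (?B a n) * l1norm (x n) \<le> 17/16 * b"
    by metis
  have x_orthant: "x n \<in> nonneg_orthant" if "n \<in> J" for n
    using x[OF that] supp_subset_nonneg_orthant by blast
  have price: "a * 2^n \<le> snd (sel (x n)) \<and> snd (sel (x n)) < 2 * (a * 2^n)" if "n \<in> J" for n
    using x[OF that] unfolding dyadic_band_def by auto
  obtain X Q where XQ: "valid_Q Q"
      "\<forall>i. 1 \<le> i \<and> i \<le> card J \<longrightarrow> X i \<in> x ` J \<and> X i \<noteq> 0 \<and> 0 \<le> gap X Q i"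
    and sum_le: "(\<Sum>n\<in>J. a * 2^n / (2 * l1norm (x n))) \<le> partial_menu_gap X Q (card J)"
    using partial_menu_gap_of_price_ladder[OF mech choice J(1) _ a x_orthant price] J(2) by blast
  have summand_le: "2 * (a * 2^n) * measure D (?B a n) * (4 / (17 * b)) \<le> a * 2^n / (2 * l1norm (x n))"
    if "n \<in> J" for n
  proof (rule band_term_le)
    show "0 < b" by (rule BRev_pos)
    show "0 \<le> a * 2^n" using a by simp
    show "measure D (?B a n) * l1norm (x n) \<le> 17/16 * b" using x[OF that] by blast
    have "0 < a * 2^n" using a by simp
    then show "0 < l1norm (x n)"
      using price[OF that] buyer_choice_price_le_l1norm[OF mech choice x_orthant[OF that]] by linarith
  qed
  have "c = 17/2 * b * c / 2 * (4 / (17 * b))" using BRev_pos by simp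
  also have "\<dots> < (\<Sum>n\<in>J. 2 * (a * 2^n) * measure D (?B a n)) * (4 / (17 * b))"
    using mass BRev_pos by (intro mult_strict_right_mono) simp_all
  also have "\<dots> = (\<Sum>n\<in>J. 2 * (a * 2^n) * measure D (?B a n) * (4 / (17 * b)))"
    by (rule sum_distrib_right)
  also have "\<dots> \<le> partial_menu_gap X Q (card J)"
    using sum_mono[OF summand_le] sum_le by (rule order_trans)
  finally have "c \<le> partial_menu_gap X Q (card J)" by simp
  moreover have "x ` J \<subseteq> supp D" using x by blast
  then have "menu_block (supp D) (card J) X Q"
    using XQ unfolding menu_block_def by blast
  ultimately show ?thesis by blast
qed

lemma exists_menu_block_of_Rev:
  assumes Rev: "ereal (17/2 * b * c) < Rev D" and c: "0 < c"
  shows "\<exists>L X Q. menu_block (supp D) L X Q \<and> c \<le> partial_menu_gap X Q L"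
proof -
  obtain M sel where adm: "admissible D M sel" and rev: "ereal (17/2 * b * c) < mech_rev D sel"
    using Rev unfolding Rev_def by (auto simp: less_SUP_iff)
  have "mech_rev D sel \<le> enn2ereal (\<integral>\<^sup>+ v. ennreal (snd (sel v)) \<partial>D)"
    unfolding mech_rev_def by (rule ereal_diff_le_self) simp
  then have "ennreal (17/2 * b * c) < (\<integral>\<^sup>+ v. ennreal (snd (sel v)) \<partial>D)"
    using rev c BRev_pos by (simp add: less_ennreal.rep_eq)
  then show ?thesis
    using adm c unfolding admissible_def by (intro exists_menu_block) auto
qed

lemma exists_menu_gap_ge_of_Rev:
  assumes "ereal (17/2 * b * c) < Rev D" "0 < c"
  shows "\<exists>L X. (\<forall>i. 1 \<le> i \<and> i \<le> L \<longrightarrow> X i \<in> supp D \<and> X i \<noteq> 0)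
    \<and> ereal c \<le> menu_gap (enat L) X"
proof -
  obtain L X Q where block: "menu_block (supp D) L X Q" and "c \<le> partial_menu_gap X Q L"
    using exists_menu_block_of_Rev[OF assms] by blast
  then have "ereal c \<le> menu_gap_Q (enat L) X Q" by (simp add: menu_gap_Q_def)
  also have "\<dots> \<le> menu_gap (enat L) X"
    using block unfolding menu_block_def by (intro menu_gap_Q_le_menu_gap) simp
  finally show ?thesis
    using block unfolding menu_block_def by (intro exI[of _ L] exI[of _ X]) auto
qed

lemma menu_gap_infinite_if_Rev_infinite:
  assumes "Rev D = \<infinity>"
  shows "\<exists>X. (\<forall>i. 1 \<le> i \<longrightarrow> X i \<in> supp D \<and> X i \<noteq> 0) \<and> menu_gap \<infinity> X = \<infinity>"
proof -
  have "\<exists>L X Q. menu_block (supp D) L X Q \<and> 2 ^ Suc k \<le> partial_menu_gap X Q L" for k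
    using assms by (intro exists_menu_block_of_Rev) simp_all
  then obtain L Xb Qb where "\<And>k. menu_block (supp D) (L k) (Xb k) (Qb k)"
      "\<And>k. 2 ^ Suc k \<le> partial_menu_gap (Xb k) (Qb k) (L k)"
    by metis
  then interpret menu_block_sequence "supp D" L Xb Qb
    using supp_subset_nonneg_orthant by unfold_locales
  show ?thesis using concat_points_in menu_gap_concat_points by blast
qed

lemma exists_menu_gap_ge_Rev_ratio:
  "\<exists>N X. (\<forall>i. 1 \<le> i \<and> enat i \<le> N \<longrightarrow> X i \<in> supp D \<and> X i \<noteq> 0)
    \<and> Rev D / (9 * ereal b) \<le> menu_gap N X"
proof -
  consider "Rev D \<le> 0" | r where "Rev D = ereal r" "0 < r" | "Rev D = \<infinity>"
  proof (cases "Rev D")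
    case (real r)
    then show ?thesis using that(1,2) by (cases "0 < r") auto
  qed (use that in auto)
  then show ?thesis
  proof cases
    case 1
    then have "Rev D / (9 * ereal b) \<le> 0"
      using BRev_pos by (cases "Rev D") (auto simp: divide_le_0_iff)
    then show ?thesis
      using menu_gap_nonneg[of "enat 0"] by (intro exI[of _ "enat 0"] exI) (auto intro: order_trans)
  next
    case (2 r)
    have "ereal (17/2 * b * (r / (9 * b))) < Rev D" "0 < r / (9 * b)" using 2 BRev_pos by simp_all
    then obtain L X where "\<forall>i. 1 \<le> i \<and> i \<le> L \<longrightarrow> X i \<in> supp D \<and> X i \<noteq> 0"
        "ereal (r / (9 * b)) \<le> menu_gap (enat L) X"
      by (blast dest: exists_menu_gap_ge_of_Rev)
    moreover have "Rev D / (9 * ereal b) = ereal (r / (9 * b))" using 2 BRev_pos by simp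
    ultimately show ?thesis by (intro exI[of _ "enat L"] exI[of _ X]) simp
  next
    case 3
    then obtain X where "\<forall>i. 1 \<le> i \<longrightarrow> X i \<in> supp D \<and> X i \<noteq> 0" "menu_gap \<infinity> X = \<infinity>"
      using menu_gap_infinite_if_Rev_infinite by blast
    then show ?thesis by (intro exI[of _ \<infinity>] exI[of _ X]) simp
  qed
qed

end

theorem theorem3p1:
  fixes D :: "(real^'k) measure"
  assumes "prob_space D"
    and "sets D = sets borel"
    and "emeasure D nonneg_orthant = 1"
    and "0 < BRev D" and "BRev D < \<infinity>"
  shows "\<exists>(N::enat) (X::nat \<Rightarrow> real^'k).
           (\<forall>i. 1 \<le> i \<and> enat i \<le> N \<longrightarrow> X i \<in> supp D \<and> X i \<noteq> 0) \<and>
           menu_gap N X \<ge> Rev D / (9 * BRev D)"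
proof -
  obtain b where b: "BRev D = ereal b" "0 < b" using assms(4,5) by (cases "BRev D") auto
  interpret valuation_distribution D b
    using assms(1-3) b by (intro valuation_distribution.intro valuation_distribution_axioms.intro)
  show ?thesis using exists_menu_gap_ge_Rev_ratio b(1) by simp
qed

end
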